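(* Let $R$ be a ring of the standard form below, $\omega$ its normalized homogeneous weight and $\mathcal P_{\rm hom}$ the induced partition. Then: (a) $\omega(a)\neq1$ for all $a\in\mathrm{soc}(R)$, so if $R\neq\mathrm{soc}(R)$ then $R\setminus\mathrm{soc}(R)$ is a block of $\mathcal P_{\rm hom}$; (b) there exists a nonzero $a\in R$ with $\omega(a)=0$ if and only if there is an index $i\in\{1,\dots,t\}$ with $q_i=2$ and $n_i\ge2$; and in this case $\mathcal P_{\rm hom}$ is not reflexive.
   Context: Standard form: $R=R_1\times\cdots\times R_t$ with $R_i=R_{i,1}\times\cdots\times R_{i,n_i}$, where each $R_{i,j}$ is a finite local Frobenius ring with $|R_{i,j}/\mathrm{rad}(R_{i,j})|=|\mathrm{soc}(R_{i,j})|=q_i$ for all $j$, and $q_1,\dots,q_t$ distinct ($\mathrm{rad}$ = Jacobson radical, $\mathrm{soc}$ = socle; a finite ring is Frobenius if it admits a generating character, i.e. a character $\chi$ of its additive group such that $r\mapsto(x\mapsto\chi(xr))$ is a bijection onto the character group). The normalized homogeneous weight on $R$ is the unique $\omega:R\to\mathbb Q$ with $\omega(0)=0$, $\omega(x)=\omega(y)$ whenever $Rx=Ry$, and $\sum_{y\in Rx}\omega(y)=|Rx|$ for $x\ne0$; $\mathcal P_{\rm hom}$ is the partition of $R$ into sets of elements of equal weight. For a partition $\mathcal P$ of $R$ and a generating character $\chi$, the right $\chi$-dual partition is given by $a\sim a'$ iff $\sum_{b\in P}\chi(ab)=\sum_{b\in P}\chi(a'b)$ for all blocks $P$; $\mathcal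 P$ is reflexive if the left $\chi$-dual of its right $\chi$-dual equals $\mathcal P$ (left dual: use $\chi(ba)$), equivalently if $\mathcal P$ and its right $\chi$-dual have the same number of blocks. *)

theory Defs
  imports Complex_Main "HOL-Algebra.Ring" "HOL-Algebra.AbelCoset"
begin

definition prod_ring :: "'i set \<Rightarrow> ('i \<Rightarrow> 'a ring) \<Rightarrow> ('i \<Rightarrow> 'a) ring" where
  "prod_ring I S =
     \<lparr> carrier = PiE I (\<lambda>k. carrier (S k)),
       mult = (\<lambda>x y. \<lambda>k\<in>I. x k \<otimes>\<^bsub>S k\<^esub> y k),
       one = (\<lambda>k\<in>I. \<one>\<^bsub>S k\<^esub>),
       zero = (\<lambda>k\<in>I. \<zero>\<^bsub>S k\<^esub>),
       add = (\<lambda>x y. \<lambda>k\<in>I. x k \<oplus>\<^bsub>S k\<^esub> y k) \<rparr>"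

definition left_ideal :: "('a, 'm) ring_scheme \<Rightarrow> 'a set \<Rightarrow> bool" where
  "left_ideal R L \<longleftrightarrow> additive_subgroup L R \<and>
     (\<forall>r\<in>carrier R. \<forall>x\<in>L. r \<otimes>\<^bsub>R\<^esub> x \<in> L)"

definition maximal_left_ideal :: "('a, 'm) ring_scheme \<Rightarrow> 'a set \<Rightarrow> bool" where
  "maximal_left_ideal R M \<longleftrightarrow> left_ideal R M \<and> M \<noteq> carrier R \<and>
     (\<forall>L. left_ideal R L \<and> M \<subseteq> L \<longrightarrow> L = M \<or> L = carrier R)"

definition minimal_left_ideal :: "('a, 'm) ring_scheme \<Rightarrow> 'a set \<Rightarrow> bool" where
  "minimal_left_ideal R N \<longleftrightarrow> left_ideal R N \<and> N \<noteq> {\<zero>\<^bsub>R\<^esub>} \<and>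
     (\<forall>L. left_ideal R L \<and> L \<subseteq> N \<longrightarrow> L = {\<zero>\<^bsub>R\<^esub>} \<or> L = N)"

definition jac_rad :: "('a, 'm) ring_scheme \<Rightarrow> 'a set" where
  "jac_rad R = {x \<in> carrier R. \<forall>M. maximal_left_ideal R M \<longrightarrow> x \<in> M}"

text \<open>(Left) socle: sum of all minimal left ideals, i.e. the smallest left ideal
  containing all of them.\<close>
definition socle :: "('a, 'm) ring_scheme \<Rightarrow> 'a set" where
  "socle R = \<Inter> {L. left_ideal R L \<and> (\<forall>N. minimal_left_ideal R N \<longrightarrow> N \<subseteq> L)}"

definition local_ring :: "('a, 'm) ring_scheme \<Rightarrow> bool" where
  "local_ring R \<longleftrightarrow> ring R \<and> (\<exists>!M. maximal_left_ideal R M)"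

definition quot_card :: "('a, 'm) ring_scheme \<Rightarrow> 'a set \<Rightarrow> nat" where
  "quot_card R J = card ((\<lambda>x. (\<lambda>j. x \<oplus>\<^bsub>R\<^esub> j) ` J) ` carrier R)"

definition add_chars :: "('a, 'm) ring_scheme \<Rightarrow> ('a \<Rightarrow> complex) set" where
  "add_chars R = {\<chi> \<in> extensional (carrier R).
      (\<forall>x\<in>carrier R. \<chi> x \<noteq> 0) \<and>
      (\<forall>x\<in>carrier R. \<forall>y\<in>carrier R. \<chi> (x \<oplus>\<^bsub>R\<^esub> y) = \<chi> x * \<chi> y)}"

definition generating_char :: "('a, 'm) ring_scheme \<Rightarrow> ('a \<Rightarrow> complex) \<Rightarrow> bool" where
  "generating_char R \<chi> \<longleftrightarrow> \<chi> \<in> add_chars R \<and>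
     bij_betw (\<lambda>r. \<lambda>x\<in>carrier R. \<chi> (x \<otimes>\<^bsub>R\<^esub> r)) (carrier R) (add_chars R)"

definition frobenius_ring :: "('a, 'm) ring_scheme \<Rightarrow> bool" where
  "frobenius_ring R \<longleftrightarrow> ring R \<and> finite (carrier R) \<and> (\<exists>\<chi>. generating_char R \<chi>)"

definition left_principal :: "('a, 'm) ring_scheme \<Rightarrow> 'a \<Rightarrow> 'a set" where
  "left_principal R x = (\<lambda>r. r \<otimes>\<^bsub>R\<^esub> x) ` carrier R"

definition normalized_hom_weight :: "('a, 'm) ring_scheme \<Rightarrow> ('a \<Rightarrow> rat) \<Rightarrow> bool" where
  "normalized_hom_weight R \<omega> \<longleftrightarrow>
     \<omega> \<zero>\<^bsub>R\<^esub> = 0 \<and>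
     (\<forall>x\<in>carrier R. \<forall>y\<in>carrier R. left_principal R x = left_principal R y \<longrightarrow> \<omega> x = \<omega> y) \<and>
     (\<forall>x\<in>carrier R. x \<noteq> \<zero>\<^bsub>R\<^esub> \<longrightarrow>
        (\<Sum>y\<in>left_principal R x. \<omega> y) = of_nat (card (left_principal R x)))"

definition level_partition :: "('a, 'm) ring_scheme \<Rightarrow> ('a \<Rightarrow> 'b) \<Rightarrow> 'a set set" where
  "level_partition R f = (\<lambda>x. {y \<in> carrier R. f y = f x}) ` carrier R"

definition right_dual :: "('a, 'm) ring_scheme \<Rightarrow> ('a \<Rightarrow> complex) \<Rightarrow> 'a set set \<Rightarrow> 'a set set" where
  "right_dual R \<chi> P = (\<lambda>a. {a' \<in> carrier R. \<forall>B\<in>P.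
        (\<Sum>b\<in>B. \<chi> (a \<otimes>\<^bsub>R\<^esub> b)) = (\<Sum>b\<in>B. \<chi> (a' \<otimes>\<^bsub>R\<^esub> b))}) ` carrier R"

definition left_dual :: "('a, 'm) ring_scheme \<Rightarrow> ('a \<Rightarrow> complex) \<Rightarrow> 'a set set \<Rightarrow> 'a set set" where
  "left_dual R \<chi> P = (\<lambda>a. {a' \<in> carrier R. \<forall>B\<in>P.
        (\<Sum>b\<in>B. \<chi> (b \<otimes>\<^bsub>R\<^esub> a)) = (\<Sum>b\<in>B. \<chi> (b \<otimes>\<^bsub>R\<^esub> a'))}) ` carrier R"

definition reflexive_partition :: "('a, 'm) ring_scheme \<Rightarrow> ('a \<Rightarrow> complex) \<Rightarrow> 'a set set \<Rightarrow> bool" where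
  "reflexive_partition R \<chi> P \<longleftrightarrow> left_dual R \<chi> (right_dual R \<chi> P) = P"

end

theory Submission
  imports Defs
begin

text \<open>In a finite local ring \<open>S\<close> with \<open>|S/rad S| = |soc S| = q\<close>, a minimal left ideal \<open>Sx\<close> is
  isomorphic to \<open>S/ann x\<close> with \<open>ann x\<close> maximal, i.e. \<open>ann x = rad S\<close>; so it has \<open>q\<close>
  elements and equals the socle, which thus lies in every nonzero principal left ideal.
  In the product \<open>R = \<Prod>\<^sub>k S\<^sub>k\<close> principal ideals and the socle are computed componentwise, and the
  normalized homogeneous weight, being unique, is \<open>\<omega>(x) = 1 - \<Prod>\<^sub>k w\<^sub>k(x\<^sub>k)\<close>, where
  \<open>w\<^sub>k\<close> is \<open>1\<close> at \<open>0\<close>, \<open>-1/(q\<^sub>k-1)\<close> on the rest of the socle and \<open>0\<close> off it: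
  over \<open>Rx\<close> the product sum factorizes and some factor sums to \<open>0\<close> over the socle. So
  \<open>\<omega> = 1\<close> exactly off \<open>soc R\<close>, and \<open>\<omega>(a) = 0\<close> means that \<open>\<Prod> -1/(q\<^sub>k-1) = 1\<close> over the
  support of \<open>a\<close>, i.e. an even support with all \<open>q\<^sub>k = 2\<close>. Finally \<open>{0}\<close> is always a
  block of the bidual of a partition, whereas such an \<open>a\<close> shares the block of \<open>0\<close>.\<close>

section \<open>Left ideals and principal left ideals\<close>

lemma (in ring) left_idealI:
  assumes sub: "L \<subseteq> carrier R" and "\<zero> \<in> L"
    and "\<And>a b. a \<in> L \<Longrightarrow> b \<in> L \<Longrightarrow> a \<oplus> b \<in> L"
    and mult: "\<And>r a. r \<in> carrier R \<Longrightarrow> a \<in> L \<Longrightarrow> r \<otimes> a \<in> L"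
  shows "left_ideal R L"
proof -
  have "\<ominus> a \<in> L" if a: "a \<in> L" for a
  proof -
    have "\<ominus> a = (\<ominus> \<one>) \<otimes> a" using a sub by (auto simp: l_minus)
    then show ?thesis using mult[OF _ a] by simp
  qed
  then have "subgroup L (add_monoid R)"
    by (intro add.subgroupI) (use assms in \<open>auto simp: a_inv_def\<close>)
  then show ?thesis
    unfolding left_ideal_def using mult by (auto intro: additive_subgroupI)
qed

lemma left_idealD:
  assumes "left_ideal R L"
  shows "L \<subseteq> carrier R" "\<zero>\<^bsub>R\<^esub> \<in> L"
    "\<And>a b. a \<in> L \<Longrightarrow> b \<in> L \<Longrightarrow> a \<oplus>\<^bsub>R\<^esub> b \<in> L"
    "\<And>r a. r \<in> carrier R \<Longrightarrow> a \<in> L \<Longrightarrow> r \<otimes>\<^bsub>R\<^esub> a \<in> L"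
  using assms unfolding left_ideal_def
  by (auto simp: additive_subgroup.a_subset additive_subgroup.a_closed
      additive_subgroup.zero_closed)

context ring
begin

lemma left_ideal_carrier: "left_ideal R (carrier R)"
  by (rule left_idealI) auto

lemma left_ideal_zero: "left_ideal R {\<zero>}"
  by (rule left_idealI) auto

lemma left_ideal_image_mult:
  assumes L: "left_ideal R L" and x: "x \<in> carrier R"
  shows "left_ideal R ((\<lambda>l. l \<otimes> x) ` L)"
proof -
  note L' = left_idealD[OF L]
  have [simp]: "l \<in> L \<Longrightarrow> l \<in> carrier R" for l using L'(1) by blast
  show ?thesis
  proof (rule left_idealI)
    show "\<zero> \<in> (\<lambda>l. l \<otimes> x) ` L" using x L'(2) by (intro image_eqI[of _ _ \<zero>]) auto
    fix a b assume "a \<in> (\<lambda>l. l \<otimes> x) ` L" "b \<in> (\<lambda>l. l \<otimes> x) ` L"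
    then show "a \<oplus> b \<in> (\<lambda>l. l \<otimes> x) ` L"
      using x L'(3) by (auto simp: l_distr[symmetric])
  next
    fix r a assume "r \<in> carrier R" "a \<in> (\<lambda>l. l \<otimes> x) ` L"
    then show "r \<otimes> a \<in> (\<lambda>l. l \<otimes> x) ` L"
      using x L'(4) by (auto simp: m_assoc[symmetric])
  qed (use x in auto)
qed

lemma left_ideal_left_principal: "x \<in> carrier R \<Longrightarrow> left_ideal R (left_principal R x)"
  unfolding left_principal_def by (rule left_ideal_image_mult[OF left_ideal_carrier])

lemma left_principal_subset: "x \<in> carrier R \<Longrightarrow> left_principal R x \<subseteq> carrier R"
  using left_idealD(1)[OF left_ideal_left_principal] .

lemma left_principal_self: "x \<in> carrier R \<Longrightarrow> x \<in> left_principal R x"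
  unfolding left_principal_def by (rule image_eqI[of _ _ \<one>]) auto

lemma left_principal_least: "left_ideal R L \<Longrightarrow> x \<in> L \<Longrightarrow> left_principal R x \<subseteq> L"
  unfolding left_principal_def using left_idealD(4)[of R L _ x] by blast

lemma left_principal_mono:
  "x \<in> carrier R \<Longrightarrow> y \<in> left_principal R x \<Longrightarrow> left_principal R y \<subseteq> left_principal R x"
  by (rule left_principal_least[OF left_ideal_left_principal])

lemma left_principal_zero: "left_principal R \<zero> = {\<zero>}"
  unfolding left_principal_def by auto

lemma left_principal_eq_zero_iff:
  "x \<in> carrier R \<Longrightarrow> left_principal R x = {\<zero>} \<longleftrightarrow> x = \<zero>"
  using left_principal_self left_principal_zero by blast

lemma minimal_left_ideal_exists:
  assumes fin: "finite (carrier R)" and L: "left_ideal R L" "L \<noteq> {\<zero>}"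
  shows "\<exists>N. minimal_left_ideal R N \<and> N \<subseteq> L"
proof -
  define F where "F = {L'. left_ideal R L' \<and> L' \<subseteq> L \<and> L' \<noteq> {\<zero>}}"
  have "F \<subseteq> Pow (carrier R)" unfolding F_def using left_idealD(1) by blast
  then have "finite F" using fin by (rule finite_subset[OF _ finite_Pow_iff[THEN iffD2]])
  moreover have "L \<in> F" using L unfolding F_def by blast
  ultimately obtain N where N: "N \<in> F" and least: "\<And>L'. L' \<in> F \<Longrightarrow> L' \<subseteq> N \<Longrightarrow> N = L'"
    using finite_has_minimal[of F] by blast
  have "minimal_left_ideal R N"
    unfolding minimal_left_ideal_def using N least by (auto simp: F_def)
  then show ?thesis using N unfolding F_def by blast
qed

lemma left_coset_eq_iff:
  assumes H: "additive_subgroup H R" and a: "a \<in> carrier R" and b: "b \<in> carrier R"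
  shows "(\<lambda>h. a \<oplus> h) ` H = (\<lambda>h. b \<oplus> h) ` H \<longleftrightarrow> \<ominus> a \<oplus> b \<in> H"
proof -
  interpret abelian_subgroup H R by (rule abelian_subgroupI3[OF H is_abelian_group])
  have coset: "(\<lambda>h. x \<oplus> h) ` H = x <+ H" for x unfolding a_l_coset_def' by auto
  show ?thesis
    unfolding coset a_l_coset_eq_rcong[OF a] a_l_coset_eq_rcong[OF b]
      eq_equiv_class_iff[OF a_equiv_rcong a b]
    using a b by (simp add: a_r_congruent_def r_congruent_def a_inv_def)
qed

end

lemma card_image_eq_if_same_fibres:
  assumes "\<And>r s. r \<in> C \<Longrightarrow> s \<in> C \<Longrightarrow> g r = g s \<longleftrightarrow> h r = h s"
  shows "card (g ` C) = card (h ` C)"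
proof -
  define \<phi> where "\<phi> y = g (inv_into C h y)" for y
  have \<phi>: "\<phi> (h r) = g r" if "r \<in> C" for r
    unfolding \<phi>_def using assms that inv_into_into[of "h r" h C] f_inv_into_f[of "h r" h C] by blast
  have "g ` C = \<phi> ` h ` C" using \<phi> by (auto simp: image_image)
  moreover have "inj_on \<phi> (h ` C)" by (auto simp: inj_on_def \<phi> assms)
  ultimately show ?thesis by (simp add: card_image)
qed

definition left_annihilator :: "('a, 'm) ring_scheme \<Rightarrow> 'a \<Rightarrow> 'a set" where
  "left_annihilator R x = {r \<in> carrier R. r \<otimes>\<^bsub>R\<^esub> x = \<zero>\<^bsub>R\<^esub>}"

context ring
begin

lemma left_ideal_left_annihilator:
  assumes x: "x \<in> carrier R"
  shows "left_ideal R (left_annihilator R x)"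
  by (rule left_idealI) (use x in \<open>auto simp: left_annihilator_def l_distr m_assoc\<close>)

lemma card_left_principal:
  assumes x: "x \<in> carrier R"
  shows "card (left_principal R x) = quot_card R (left_annihilator R x)"
  unfolding left_principal_def quot_card_def
proof (rule card_image_eq_if_same_fibres)
  fix r s assume r: "r \<in> carrier R" and s: "s \<in> carrier R"
  have "(\<ominus> r \<oplus> s) \<otimes> x = \<ominus> (r \<otimes> x) \<oplus> s \<otimes> x"
    using r s x by (simp add: l_distr l_minus)
  then have "r \<otimes> x = s \<otimes> x \<longleftrightarrow> (\<ominus> r \<oplus> s) \<otimes> x = \<zero>"
    using add.inv_solve_left'[of \<zero> "r \<otimes> x" "s \<otimes> x"] r s x by auto
  also have "\<dots> \<longleftrightarrow> (\<lambda>j. r \<oplus> j) ` left_annihilator R x = (\<lambda>j. s \<oplus> j) ` left_annihilator R x"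
    using left_coset_eq_iff[OF _ r s] left_ideal_left_annihilator[OF x] r s
    by (auto simp: left_ideal_def left_annihilator_def)
  finally show "r \<otimes> x = s \<otimes> x \<longleftrightarrow>
      (\<lambda>j. r \<oplus> j) ` left_annihilator R x = (\<lambda>j. s \<oplus> j) ` left_annihilator R x" .
qed

lemma maximal_left_annihilator:
  assumes x: "x \<in> carrier R" and min: "minimal_left_ideal R (left_principal R x)"
  shows "maximal_left_ideal R (left_annihilator R x)"
  unfolding maximal_left_ideal_def
proof (intro conjI allI impI)
  let ?A = "left_annihilator R x"
  show "left_ideal R ?A" using left_ideal_left_annihilator[OF x] .
  have "x \<noteq> \<zero>" using min left_principal_zero by (auto simp: minimal_left_ideal_def)
  then have "\<one> \<notin> ?A" using x by (simp add: left_annihilator_def)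
  then show "?A \<noteq> carrier R" by auto
  fix L assume L: "left_ideal R L \<and> ?A \<subseteq> L"
  then have LI: "left_ideal R L" and AL: "?A \<subseteq> L" by blast+
  note Lc = left_idealD(1)[OF LI]
  have "(\<lambda>l. l \<otimes> x) ` L \<subseteq> left_principal R x" unfolding left_principal_def using Lc by blast
  then have "(\<lambda>l. l \<otimes> x) ` L = {\<zero>} \<or> (\<lambda>l. l \<otimes> x) ` L = left_principal R x"
    using min left_ideal_image_mult[OF LI x] by (auto simp: minimal_left_ideal_def)
  then show "L = ?A \<or> L = carrier R"
  proof
    assume "(\<lambda>l. l \<otimes> x) ` L = {\<zero>}"
    then have "L \<subseteq> ?A" using Lc by (auto simp: left_annihilator_def)
    then show ?thesis using AL by blast
  next
    assume "(\<lambda>l. l \<otimes> x) ` L = left_principal R x"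
    then obtain l where l: "l \<in> L" "x = l \<otimes> x" using left_principal_self[OF x] by force
    have "r \<in> L" if r: "r \<in> carrier R" for r
    proof -
      have lc: "l \<in> carrier R" using l Lc by blast
      \<comment> \<open>\<open>r = (r - r l) + r l\<close>, and \<open>r - r l\<close> annihilates \<open>x = l x\<close>\<close>
      have "(r \<ominus> r \<otimes> l) \<otimes> x = \<zero>"
        using r lc x l(2) by (simp add: a_minus_def l_distr l_minus m_assoc r_neg)
      then have "r \<ominus> r \<otimes> l \<in> ?A" using r lc by (simp add: left_annihilator_def)
      then have "r \<ominus> r \<otimes> l \<in> L" using AL by blast
      moreover have "r \<otimes> l \<in> L" using left_idealD(4)[OF LI r l(1)] .
      ultimately have "(r \<ominus> r \<otimes> l) \<oplus> r \<otimes> l \<in> L" by (rule left_idealD(3)[OF LI])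
      then show ?thesis using r lc by (simp add: a_minus_def a_assoc l_neg)
    qed
    then show ?thesis using Lc by blast
  qed
qed

end

lemma (in ring) minimal_left_ideal_subset_socle:
  "minimal_left_ideal R N \<Longrightarrow> N \<subseteq> socle R"
  unfolding socle_def by blast

lemma (in ring) socle_subset_carrier: "socle R \<subseteq> carrier R"
proof -
  have "N \<subseteq> carrier R" if "minimal_left_ideal R N" for N
    using that left_idealD(1) unfolding minimal_left_ideal_def by blast
  then show ?thesis unfolding socle_def using left_ideal_carrier by blast
qed

section \<open>Local rings whose socle has the size of the residue field\<close>

locale socle_local_ring = ring +
  assumes finite_carrier: "finite (carrier R)"
    and unique_maximal_left_ideal: "\<exists>!M. maximal_left_ideal R M"
    and quot_card_jac_rad: "quot_card R (jac_rad R) = card (socle R)"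
begin

lemma jac_rad_eq_maximal_left_ideal:
  assumes M: "maximal_left_ideal R M"
  shows "jac_rad R = M"
proof -
  have "M \<subseteq> carrier R" using M left_idealD(1) unfolding maximal_left_ideal_def by blast
  moreover have "M' = M" if "maximal_left_ideal R M'" for M'
    using M that unique_maximal_left_ideal by blast
  ultimately show ?thesis using M unfolding jac_rad_def by blast
qed

lemma finite_socle: "finite (socle R)"
  using finite_subset[OF socle_subset_carrier finite_carrier] .

lemma minimal_left_ideal_eq_socle:
  assumes N: "minimal_left_ideal R N"
  shows "N = socle R"
proof -
  obtain x where xN: "x \<in> N" and x0: "x \<noteq> \<zero>"
    using N left_idealD(2) unfolding minimal_left_ideal_def by blast
  have x: "x \<in> carrier R" using xN N left_idealD(1) unfolding minimal_left_ideal_def by blast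
  have "left_principal R x \<subseteq> N" "left_principal R x \<noteq> {\<zero>}"
    using N left_principal_least xN left_principal_eq_zero_iff[OF x] x0
    unfolding minimal_left_ideal_def by auto
  then have Nx: "left_principal R x = N"
    using N left_ideal_left_principal[OF x] unfolding minimal_left_ideal_def by blast
  have "card N = quot_card R (left_annihilator R x)"
    using card_left_principal[OF x] Nx by simp
  also have "left_annihilator R x = jac_rad R"
    using jac_rad_eq_maximal_left_ideal maximal_left_annihilator[OF x] N Nx by simp
  finally have "card N = card (socle R)" using quot_card_jac_rad by simp
  then show ?thesis
    using card_subset_eq[OF finite_socle minimal_left_ideal_subset_socle[OF N]] by blast
qed

lemma minimal_left_ideal_socle: "minimal_left_ideal R (socle R)"
proof -
  obtain M where M: "maximal_left_ideal R M" using unique_maximal_left_ideal by blast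
  have MI: "left_ideal R M" and "M \<noteq> carrier R" using M unfolding maximal_left_ideal_def by blast+
  then have "carrier R \<noteq> {\<zero>}" using left_idealD(1,2)[OF MI] by (metis subset_singletonD empty_iff)
  then obtain N where "minimal_left_ideal R N"
    using minimal_left_ideal_exists[OF finite_carrier left_ideal_carrier] by blast
  then show ?thesis using minimal_left_ideal_eq_socle by simp
qed

lemma left_ideal_socle: "left_ideal R (socle R)"
  using minimal_left_ideal_socle unfolding minimal_left_ideal_def by blast

lemma zero_in_socle: "\<zero> \<in> socle R"
  using left_idealD(2)[OF left_ideal_socle] .

lemma socle_subset_left_principal:
  assumes x: "x \<in> carrier R" and x0: "x \<noteq> \<zero>"
  shows "socle R \<subseteq> left_principal R x"
proof -
  have "left_principal R x \<noteq> {\<zero>}" using left_principal_eq_zero_iff[OF x] x0 by blast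
  then obtain N where "minimal_left_ideal R N" "N \<subseteq> left_principal R x"
    using minimal_left_ideal_exists[OF finite_carrier left_ideal_left_principal[OF x]] by blast
  then show ?thesis using minimal_left_ideal_eq_socle by blast
qed

lemma left_principal_socle:
  assumes x: "x \<in> socle R" and x0: "x \<noteq> \<zero>"
  shows "left_principal R x = socle R"
proof -
  have "x \<in> carrier R" using x socle_subset_carrier by blast
  then show ?thesis
    using socle_subset_left_principal x0 left_principal_least[OF left_ideal_socle x] by blast
qed

lemma socle_nonzero: "\<exists>s\<in>socle R. s \<noteq> \<zero>"
  using minimal_left_ideal_socle zero_in_socle unfolding minimal_left_ideal_def by blast

lemma two_le_card_socle: "2 \<le> card (socle R)"
proof -
  obtain y where "y \<in> socle R" "y \<noteq> \<zero>" using socle_nonzero by blast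
  then have "{\<zero>, y} \<subseteq> socle R" using zero_in_socle by blast
  then have "card {\<zero>, y} \<le> card (socle R)" by (rule card_mono[OF finite_socle])
  then show ?thesis using \<open>y \<noteq> \<zero>\<close> by simp
qed

end

lemma socle_local_ringI:
  assumes "local_ring A" "frobenius_ring A" "quot_card A (jac_rad A) = card (socle A)"
  shows "socle_local_ring A"
  using assms unfolding local_ring_def frobenius_ring_def
  by (intro socle_local_ring.intro socle_local_ring_axioms.intro) auto

section \<open>Finite products of rings\<close>

lemma prod_ring_simps:
  "carrier (prod_ring I S) = PiE I (\<lambda>k. carrier (S k))"
  "x \<otimes>\<^bsub>prod_ring I S\<^esub> y = (\<lambda>k\<in>I. x k \<otimes>\<^bsub>S k\<^esub> y k)"
  "x \<oplus>\<^bsub>prod_ring I S\<^esub> y = (\<lambda>k\<in>I. x k \<oplus>\<^bsub>S k\<^esub> y k)"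
  "\<one>\<^bsub>prod_ring I S\<^esub> = (\<lambda>k\<in>I. \<one>\<^bsub>S k\<^esub>)"
  "\<zero>\<^bsub>prod_ring I S\<^esub> = (\<lambda>k\<in>I. \<zero>\<^bsub>S k\<^esub>)"
  by (simp_all add: prod_ring_def)

lemma prod_ring_ring:
  assumes S: "\<And>k. k \<in> I \<Longrightarrow> ring (S k)"
  shows "ring (prod_ring I S)"
proof -
  note simps = prod_ring_simps ring.ring_simprules[OF S] PiE_iff
    monoid.r_one[OF ring.is_monoid[OF S]] monoid.l_one[OF ring.is_monoid[OF S]]
  have eq: "x = y" if "x \<in> carrier (prod_ring I S)" "y \<in> carrier (prod_ring I S)"
    "\<And>k. k \<in> I \<Longrightarrow> x k = y k" for x y
    using that by (intro PiE_ext[of x I "\<lambda>k. carrier (S k)"]) (simp_all add: prod_ring_simps)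
  show ?thesis
  proof (rule ringI)
    show "abelian_group (prod_ring I S)"
    proof (rule abelian_groupI)
      fix x assume x: "x \<in> carrier (prod_ring I S)"
      show "\<exists>y\<in>carrier (prod_ring I S). y \<oplus>\<^bsub>prod_ring I S\<^esub> x = \<zero>\<^bsub>prod_ring I S\<^esub>"
        using x by (intro bexI[of _ "\<lambda>k\<in>I. \<ominus>\<^bsub>S k\<^esub> x k"] eq) (auto simp: simps)
    qed (auto intro!: eq simp: simps)
    show "monoid (prod_ring I S)"
      by (rule monoidI) (auto intro!: eq simp: simps)
  qed (auto intro!: eq simp: simps)
qed

lemma left_principal_prod_ring:
  assumes S: "\<And>k. k \<in> I \<Longrightarrow> ring (S k)" and x: "x \<in> carrier (prod_ring I S)"
  shows "left_principal (prod_ring I S) x = PiE I (\<lambda>k. left_principal (S k) (x k))"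
proof
  show "left_principal (prod_ring I S) x \<subseteq> PiE I (\<lambda>k. left_principal (S k) (x k))"
    using x by (auto simp: left_principal_def prod_ring_simps PiE_iff)
  show "PiE I (\<lambda>k. left_principal (S k) (x k)) \<subseteq> left_principal (prod_ring I S) x"
  proof
    fix y assume y: "y \<in> PiE I (\<lambda>k. left_principal (S k) (x k))"
    then have "\<forall>k\<in>I. \<exists>r. r \<in> carrier (S k) \<and> y k = r \<otimes>\<^bsub>S k\<^esub> x k"
      by (auto simp: left_principal_def PiE_iff)
    then obtain r where r: "\<And>k. k \<in> I \<Longrightarrow> r k \<in> carrier (S k) \<and> y k = r k \<otimes>\<^bsub>S k\<^esub> x k"
      by metis
    have "restrict r I \<in> carrier (prod_ring I S)" using r by (simp add: prod_ring_simps)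
    moreover have "y = restrict r I \<otimes>\<^bsub>prod_ring I S\<^esub> x"
      using y r by (auto simp: prod_ring_simps PiE_iff extensional_def)
    ultimately show "y \<in> left_principal (prod_ring I S) x" unfolding left_principal_def by blast
  qed
qed

lemma left_ideal_PiE:
  assumes S: "\<And>k. k \<in> I \<Longrightarrow> ring (S k)" and A: "\<And>k. k \<in> I \<Longrightarrow> left_ideal (S k) (A k)"
  shows "left_ideal (prod_ring I S) (PiE I A)"
  using left_idealD[OF A]
  by (intro ring.left_idealI[OF prod_ring_ring[OF S]]) (auto simp: prod_ring_simps PiE_iff; blast)+

locale socle_local_product =
  fixes I :: "'i set" and S :: "'i \<Rightarrow> 'a ring"
  assumes finite_index: "finite I"
    and socle_local_factor: "\<And>k. k \<in> I \<Longrightarrow> socle_local_ring (S k)"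
begin

abbreviation R :: "('i \<Rightarrow> 'a) ring" where "R \<equiv> prod_ring I S"

lemma ring_factor: "k \<in> I \<Longrightarrow> ring (S k)"
  using socle_local_factor socle_local_ring_def by blast

lemma ring_prod: "ring R"
  by (rule prod_ring_ring[OF ring_factor])

lemma finite_carrier_prod: "finite (carrier R)"
  using socle_local_factor socle_local_ring.finite_carrier finite_index
  by (auto simp: prod_ring_simps intro!: finite_PiE)

lemma component_closed: "y \<in> carrier R \<Longrightarrow> k \<in> I \<Longrightarrow> y k \<in> carrier (S k)"
  by (auto simp: prod_ring_simps)

lemma nonzero_component:
  assumes y: "y \<in> carrier R" and y0: "y \<noteq> \<zero>\<^bsub>R\<^esub>"
  shows "\<exists>k\<in>I. y k \<noteq> \<zero>\<^bsub>S k\<^esub>"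
proof (rule ccontr)
  assume "\<not> ?thesis"
  then have "y = \<zero>\<^bsub>R\<^esub>"
    using y ring.ring_simprules(2)[OF ring_prod]
    by (intro PiE_ext[of y I "\<lambda>k. carrier (S k)"]) (auto simp: prod_ring_simps)
  then show False using y0 by contradiction
qed

definition component_socle :: "'i \<Rightarrow> ('i \<Rightarrow> 'a) set" where
  "component_socle k = PiE I (\<lambda>j. if j = k then socle (S k) else {\<zero>\<^bsub>S j\<^esub>})"

lemma left_ideal_component_socle: "k \<in> I \<Longrightarrow> left_ideal R (component_socle k)"
  unfolding component_socle_def
  by (rule left_ideal_PiE[OF ring_factor])
    (auto intro: socle_local_ring.left_ideal_socle socle_local_factor ring.left_ideal_zero ring_factor)

lemma left_principal_component_socle:
  assumes k: "k \<in> I" and y: "y \<in> component_socle k" and yk: "y k \<noteq> \<zero>\<^bsub>S k\<^esub>"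
  shows "left_principal R y = component_socle k"
proof -
  have yc: "y \<in> carrier R" using y left_idealD(1)[OF left_ideal_component_socle[OF k]] by blast
  have "left_principal R y = PiE I (\<lambda>j. left_principal (S j) (y j))"
    using left_principal_prod_ring[of I S, OF ring_factor yc] .
  also have "\<dots> = component_socle k"
    unfolding component_socle_def
  proof (rule PiE_cong)
    fix j assume j: "j \<in> I"
    have "y j \<in> (if j = k then socle (S k) else {\<zero>\<^bsub>S j\<^esub>})"
      using PiE_mem[OF y[unfolded component_socle_def] j] .
    then show "left_principal (S j) (y j) = (if j = k then socle (S k) else {\<zero>\<^bsub>S j\<^esub>})"
      using yk socle_local_ring.left_principal_socle[OF socle_local_factor[OF k]]
        ring.left_principal_zero[OF ring_factor[OF j]]
      by (cases "j = k") simp_all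
  qed
  finally show ?thesis .
qed

lemma minimal_left_ideal_component_socle:
  assumes k: "k \<in> I"
  shows "minimal_left_ideal R (component_socle k)"
  unfolding minimal_left_ideal_def
proof (intro conjI allI impI)
  show CI: "left_ideal R (component_socle k)" by (rule left_ideal_component_socle[OF k])
  obtain s where s: "s \<in> socle (S k)" "s \<noteq> \<zero>\<^bsub>S k\<^esub>"
    using socle_local_ring.socle_nonzero[OF socle_local_factor[OF k]] by blast
  define e where "e = (\<lambda>j\<in>I. if j = k then s else \<zero>\<^bsub>S j\<^esub>)"
  have "e \<in> component_socle k" "e \<noteq> \<zero>\<^bsub>R\<^esub>"
    using s k by (auto simp: e_def component_socle_def prod_ring_simps fun_eq_iff)
  then show "component_socle k \<noteq> {\<zero>\<^bsub>R\<^esub>}" by blast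
  fix L assume "left_ideal R L \<and> L \<subseteq> component_socle k"
  then have LI: "left_ideal R L" and LC: "L \<subseteq> component_socle k" by blast+
  show "L = {\<zero>\<^bsub>R\<^esub>} \<or> L = component_socle k"
  proof (cases "L = {\<zero>\<^bsub>R\<^esub>}")
    case False
    then obtain y where y: "y \<in> L" "y \<noteq> \<zero>\<^bsub>R\<^esub>" using left_idealD(2)[OF LI] by blast
    have yC: "y \<in> component_socle k" using y(1) LC by blast
    then have "y \<in> carrier R" using left_idealD(1)[OF CI] by blast
    then obtain j where j: "j \<in> I" "y j \<noteq> \<zero>\<^bsub>S j\<^esub>" using nonzero_component y(2) by blast
    have "j = k" using PiE_mem[OF yC[unfolded component_socle_def] j(1)] j(2) by (auto split: if_splits)
    then have "component_socle k = left_principal R y"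
      using left_principal_component_socle[OF k yC] j(2) by simp
    also have "\<dots> \<subseteq> L" using ring.left_principal_least[OF ring_prod LI y(1)] .
    finally show ?thesis using LC by blast
  qed simp
qed

lemma minimal_left_ideal_subset_PiE_socle:
  assumes N: "minimal_left_ideal R N"
  shows "N \<subseteq> PiE I (\<lambda>k. socle (S k))"
proof
  have NI: "left_ideal R N" using N unfolding minimal_left_ideal_def by blast
  fix x assume xN: "x \<in> N"
  have x: "x \<in> carrier R" using xN left_idealD(1)[OF NI] by blast
  have "x k \<in> socle (S k)" if k: "k \<in> I" for k
  proof (cases "x k = \<zero>\<^bsub>S k\<^esub>")
    case True
    then show ?thesis using socle_local_ring.zero_in_socle[OF socle_local_factor[OF k]] by simp
  next
    case False
    note loc = socle_local_factor[OF k]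
    have "component_socle k \<subseteq> PiE I (\<lambda>j. left_principal (S j) (x j))"
      unfolding component_socle_def
      using socle_local_ring.socle_subset_left_principal[OF loc component_closed[OF x k] False]
        left_idealD(2)[OF ring.left_ideal_left_principal[OF ring_factor component_closed[OF x]]]
      by (intro PiE_mono) auto
    also have "\<dots> = left_principal R x" using left_principal_prod_ring[of I S, OF ring_factor x] by simp
    also have "\<dots> \<subseteq> N" using ring.left_principal_least[OF ring_prod NI xN] .
    finally have "component_socle k = N"
      using N minimal_left_ideal_component_socle[OF k] unfolding minimal_left_ideal_def by blast
    then have "x \<in> component_socle k" using xN by simp
    from PiE_mem[OF this[unfolded component_socle_def] k] show ?thesis by simp
  qed
  then show "x \<in> PiE I (\<lambda>k. socle (S k))" using x by (auto simp: prod_ring_simps PiE_iff)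
qed

lemma PiE_socle_subset_left_ideal:
  assumes L: "left_ideal R L" and comp: "\<And>k. k \<in> I \<Longrightarrow> component_socle k \<subseteq> L"
  shows "PiE I (\<lambda>k. socle (S k)) \<subseteq> L"
proof
  fix t assume t: "t \<in> PiE I (\<lambda>k. socle (S k))"
  have tc: "t k \<in> carrier (S k)" if "k \<in> I" for k
    using PiE_mem[OF t that] ring.socle_subset_carrier[OF ring_factor[OF that]] by blast
  have "(\<lambda>j\<in>I. if j \<in> F then t j else \<zero>\<^bsub>S j\<^esub>) \<in> L" if "F \<subseteq> I" for F
    using finite_subset[OF that finite_index] that
  proof (induction F rule: finite_induct)
    case empty
    then show ?case using left_idealD(2)[OF L] by (simp add: prod_ring_simps restrict_def)
  next
    case (insert a F)
    define e where "e = (\<lambda>j\<in>I. if j = a then t j else \<zero>\<^bsub>S j\<^esub>)"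
    have "e \<in> component_socle a" using t insert.prems by (auto simp: e_def component_socle_def)
    then have "e \<in> L" using comp insert.prems by blast
    moreover have "(\<lambda>j\<in>I. if j \<in> F then t j else \<zero>\<^bsub>S j\<^esub>) \<in> L"
      using insert.IH insert.prems by blast
    ultimately have "(\<lambda>j\<in>I. if j \<in> F then t j else \<zero>\<^bsub>S j\<^esub>) \<oplus>\<^bsub>R\<^esub> e \<in> L"
      using left_idealD(3)[OF L] by blast
    moreover have "(\<lambda>j\<in>I. if j \<in> insert a F then t j else \<zero>\<^bsub>S j\<^esub>) =
        (\<lambda>j\<in>I. if j \<in> F then t j else \<zero>\<^bsub>S j\<^esub>) \<oplus>\<^bsub>R\<^esub> e"
      using insert.hyps tc by (auto simp: prod_ring_simps e_def fun_eq_iff ring.ring_simprules ring_factor)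
    ultimately show ?case by simp
  qed
  from this[OF order_refl] have "(\<lambda>j\<in>I. if j \<in> I then t j else \<zero>\<^bsub>S j\<^esub>) \<in> L" .
  moreover have "(\<lambda>j\<in>I. if j \<in> I then t j else \<zero>\<^bsub>S j\<^esub>) = t"
    using t by (auto simp: PiE_iff extensional_def fun_eq_iff)
  ultimately show "t \<in> L" by simp
qed

lemma socle_prod: "socle R = PiE I (\<lambda>k. socle (S k))"
proof
  have "left_ideal R (PiE I (\<lambda>k. socle (S k)))"
    using left_ideal_PiE[of I S "\<lambda>k. socle (S k)", OF ring_factor]
      socle_local_ring.left_ideal_socle[OF socle_local_factor] by blast
  then show "socle R \<subseteq> PiE I (\<lambda>k. socle (S k))"
    unfolding socle_def[of R] using minimal_left_ideal_subset_PiE_socle by (intro Inter_lower) simp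
  show "PiE I (\<lambda>k. socle (S k)) \<subseteq> socle R"
    unfolding socle_def[of R]
  proof (rule Inter_greatest)
    fix L assume "L \<in> {L. left_ideal R L \<and> (\<forall>N. minimal_left_ideal R N \<longrightarrow> N \<subseteq> L)}"
    then show "PiE I (\<lambda>k. socle (S k)) \<subseteq> L"
      using PiE_socle_subset_left_ideal[of L] minimal_left_ideal_component_socle by simp
  qed
qed

lemma PiE_socle_subset_carrier: "PiE I (\<lambda>k. socle (S k)) \<subseteq> carrier R"
  using ring.socle_subset_carrier[OF ring_prod] socle_prod by simp

end

section \<open>The homogeneous weight\<close>

text \<open>By induction on \<open>|Rx|\<close>: the defining sum over \<open>Rx\<close> determines the common value on the
  generators of \<open>Rx\<close> once it is known on the smaller principal ideals \<open>Ry \<subset> Rx\<close>.\<close>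

lemma (in ring) normalized_hom_weight_unique:
  assumes fin: "finite (carrier R)"
    and w: "normalized_hom_weight R \<omega>" and w': "normalized_hom_weight R \<omega>'"
    and x: "x \<in> carrier R"
  shows "\<omega> x = \<omega>' x"
  using x
proof (induction "card (left_principal R x)" arbitrary: x rule: less_induct)
  case (less x)
  have cong: "\<And>u v. u \<in> carrier R \<Longrightarrow> v \<in> carrier R \<Longrightarrow>
      left_principal R u = left_principal R v \<Longrightarrow> \<omega> u = \<omega> v \<and> \<omega>' u = \<omega>' v"
    using w w' unfolding normalized_hom_weight_def by blast
  show ?case
  proof (cases "x = \<zero>")
    case True
    then show ?thesis using w w' by (simp add: normalized_hom_weight_def)
  next
    case False
    define L where "L = left_principal R x"
    define E where "E = {y \<in> L. left_principal R y = L}"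
    have Lc: "L \<subseteq> carrier R" unfolding L_def by (rule left_principal_subset[OF less.prems])
    have finL: "finite L" using finite_subset[OF Lc fin] .
    have EL: "E \<subseteq> L" unfolding E_def by blast
    have xE: "x \<in> E" unfolding E_def L_def using left_principal_self[OF less.prems] by simp
    have smaller: "\<omega> y = \<omega>' y" if y: "y \<in> L - E" for y
    proof -
      have "left_principal R y \<subset> L"
        using y left_principal_mono[OF less.prems] unfolding E_def L_def by blast
      then have "card (left_principal R y) < card (left_principal R x)"
        using finL unfolding L_def by (rule psubset_card_mono[rotated])
      then show ?thesis using less.hyps y Lc by blast
    qed
    have generators: "\<omega> y = \<omega> x \<and> \<omega>' y = \<omega>' x" if y: "y \<in> E" for y
      using cong[OF _ less.prems] y Lc unfolding E_def L_def by blast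
    have "(\<Sum>y\<in>L. \<omega> y) = (\<Sum>y\<in>L. \<omega>' y)"
      using w w' less.prems False unfolding normalized_hom_weight_def L_def by simp
    moreover have "(\<Sum>y\<in>L. f y) = (\<Sum>y\<in>E. f y) + (\<Sum>y\<in>L - E. f y)" for f :: "'a \<Rightarrow> rat"
      using sum.subset_diff[OF EL finL] by (simp add: add.commute)
    moreover have "(\<Sum>y\<in>L - E. \<omega> y) = (\<Sum>y\<in>L - E. \<omega>' y)" using smaller by (rule sum.cong[OF refl])
    ultimately have "(\<Sum>y\<in>E. \<omega> y) = (\<Sum>y\<in>E. \<omega>' y)" by simp
    then have "of_nat (card E) * \<omega> x = of_nat (card E) * \<omega>' x"
      using generators by (simp cong: sum.cong)
    moreover have "card E \<noteq> 0" using finite_subset[OF EL finL] xE by auto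
    ultimately show ?thesis by simp
  qed
qed

text \<open>On a local Frobenius ring the homogeneous weight is \<open>1\<close> off the socle and \<open>q/(q-1)\<close> on
  its nonzero elements, so this is \<open>1 - \<omega>\<close>; on a product \<open>1 - \<omega>\<close> is the product of the
  factors' \<open>1 - \<omega>\<close>.\<close>

definition socle_coweight :: "('a, 'm) ring_scheme \<Rightarrow> 'a \<Rightarrow> rat" where
  "socle_coweight A v =
     (if v \<notin> socle A then 0 else if v = \<zero>\<^bsub>A\<^esub> then 1 else - 1 / (of_nat (card (socle A)) - 1))"

context socle_local_ring
begin

lemma socle_coweight_nonzero: "socle_coweight R v \<noteq> 0"
  if "v \<in> socle R"
  using that two_le_card_socle by (auto simp: socle_coweight_def)

lemma sum_socle_coweight_socle: "(\<Sum>v\<in>socle R. socle_coweight R v) = 0"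
proof -
  have q: "2 \<le> card (socle R)" by (rule two_le_card_socle)
  have "(\<Sum>v\<in>socle R. socle_coweight R v)
      = socle_coweight R \<zero> + (\<Sum>v\<in>socle R - {\<zero>}. socle_coweight R v)"
    using zero_in_socle finite_socle by (simp add: sum.remove)
  also have "(\<Sum>v\<in>socle R - {\<zero>}. socle_coweight R v)
      = of_nat (card (socle R) - 1) * (- 1 / (of_nat (card (socle R)) - 1))"
    using zero_in_socle finite_socle by (simp add: socle_coweight_def card_Diff_singleton)
  finally show ?thesis using zero_in_socle q by (simp add: socle_coweight_def)
qed

lemma sum_socle_coweight_left_principal:
  assumes x: "x \<in> carrier R" and x0: "x \<noteq> \<zero>"
  shows "(\<Sum>v\<in>left_principal R x. socle_coweight R v) = 0"
proof -
  have "finite (left_principal R x)"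
    using finite_subset[OF left_principal_subset[OF x] finite_carrier] .
  then have "(\<Sum>v\<in>left_principal R x. socle_coweight R v) = (\<Sum>v\<in>socle R. socle_coweight R v)"
    using socle_subset_left_principal[OF x x0]
    by (intro sum.mono_neutral_right) (auto simp: socle_coweight_def)
  then show ?thesis using sum_socle_coweight_socle by simp
qed

lemma socle_coweight_cong:
  assumes x: "x \<in> carrier R" and y: "y \<in> carrier R"
    and eq: "left_principal R x = left_principal R y"
  shows "socle_coweight R x = socle_coweight R y"
proof -
  have "x \<in> socle R \<longleftrightarrow> y \<in> socle R"
    using eq left_principal_self[OF x] left_principal_self[OF y]
      left_principal_least[OF left_ideal_socle] by blast
  moreover have "x = \<zero> \<longleftrightarrow> y = \<zero>"
    using eq left_principal_eq_zero_iff[OF x] left_principal_eq_zero_iff[OF y] by simp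
  ultimately show ?thesis by (simp add: socle_coweight_def)
qed

end

context socle_local_product
begin

definition product_weight :: "('i \<Rightarrow> 'a) \<Rightarrow> rat" where
  "product_weight x = 1 - (\<Prod>k\<in>I. socle_coweight (S k) (x k))"

lemma left_principal_component_eq:
  assumes x: "x \<in> carrier R" and y: "y \<in> carrier R"
    and eq: "left_principal R x = left_principal R y" and k: "k \<in> I"
  shows "left_principal (S k) (x k) = left_principal (S k) (y k)"
proof -
  have nonempty: "left_principal (S j) (z j) \<noteq> {}" if "z \<in> carrier R" "j \<in> I" for z j
    using ring.left_principal_self[OF ring_factor component_closed] that by blast
  have "PiE I (\<lambda>j. left_principal (S j) (x j)) = PiE I (\<lambda>j. left_principal (S j) (y j))"
    using eq left_principal_prod_ring[of I S, OF ring_factor x]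
      left_principal_prod_ring[of I S, OF ring_factor y] by simp
  then show ?thesis
    using PiE_eq_iff_not_empty[of I "\<lambda>j. left_principal (S j) (x j)"
        "\<lambda>j. left_principal (S j) (y j)"] nonempty x y k by blast
qed

lemma sum_product_weight_left_principal:
  assumes x: "x \<in> carrier R" and x0: "x \<noteq> \<zero>\<^bsub>R\<^esub>"
  shows "(\<Sum>y\<in>left_principal R x. product_weight y) = of_nat (card (left_principal R x))"
proof -
  have fin: "finite (left_principal (S k) (x k))" if "k \<in> I" for k
    using finite_subset[OF ring.left_principal_subset[OF ring_factor component_closed[OF x]]]
      socle_local_ring.finite_carrier[OF socle_local_factor] that by blast
  obtain k where k: "k \<in> I" "x k \<noteq> \<zero>\<^bsub>S k\<^esub>" using nonzero_component[OF x x0] by blast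
  have lp: "left_principal R x = PiE I (\<lambda>j. left_principal (S j) (x j))"
    using left_principal_prod_ring[of I S, OF ring_factor x] .
  have "(\<Sum>y\<in>left_principal R x. \<Prod>j\<in>I. socle_coweight (S j) (y j))
      = (\<Prod>j\<in>I. \<Sum>v\<in>left_principal (S j) (x j). socle_coweight (S j) v)"
    unfolding lp using prod_sum_PiE[of I "\<lambda>j. left_principal (S j) (x j)" "\<lambda>j v. socle_coweight (S j) v"]
      finite_index fin by simp
  also have "\<dots> = 0"
    using socle_local_ring.sum_socle_coweight_left_principal[OF socle_local_factor[OF k(1)]
        component_closed[OF x k(1)] k(2)] k(1) finite_index
    by (intro prod_zero) auto
  finally show ?thesis by (simp add: product_weight_def sum_subtractf)
qed

lemma normalized_hom_weight_product_weight: "normalized_hom_weight R product_weight"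
  unfolding normalized_hom_weight_def
proof (intro conjI ballI impI)
  have "socle_coweight (S k) \<zero>\<^bsub>S k\<^esub> = 1" if "k \<in> I" for k
    using socle_local_ring.zero_in_socle[OF socle_local_factor[OF that]]
    by (simp add: socle_coweight_def)
  then show "product_weight \<zero>\<^bsub>R\<^esub> = 0" by (simp add: product_weight_def prod_ring_simps)
  fix x y assume x: "x \<in> carrier R" and y: "y \<in> carrier R"
    and eq: "left_principal R x = left_principal R y"
  then show "product_weight x = product_weight y"
    using socle_local_ring.socle_coweight_cong[OF socle_local_factor component_closed[OF x]
        component_closed[OF y] left_principal_component_eq[OF x y eq]]
    unfolding product_weight_def by (simp cong: prod.cong)
next
  fix x assume "x \<in> carrier R" "x \<noteq> \<zero>\<^bsub>R\<^esub>"
  then show "(\<Sum>y\<in>left_principal R x. product_weight y) = of_nat (card (left_principal R x))"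
    by (rule sum_product_weight_left_principal)
qed

end

lemma prod_neg_inverse_eq_one_iff:
  fixes q :: "'i \<Rightarrow> nat"
  assumes K: "finite K" and q: "\<And>k. k \<in> K \<Longrightarrow> 2 \<le> q k"
  shows "(\<Prod>k\<in>K. - 1 / (of_nat (q k) - 1) :: rat) = 1 \<longleftrightarrow> even (card K) \<and> (\<forall>k\<in>K. q k = 2)"
proof
  define P where "P = (\<Prod>k\<in>K. q k - 1)"
  have "(\<Prod>k\<in>K. - 1 / (of_nat (q k) - 1) :: rat) = (\<Prod>k\<in>K. - 1 / of_nat (q k - 1))"
  proof (rule prod.cong[OF refl])
    fix k assume "k \<in> K"
    then have "1 \<le> q k" using q[of k] by simp
    then show "- 1 / (of_nat (q k) - 1) = - 1 / (of_nat (q k - 1) :: rat)" by simp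
  qed
  also have "\<dots> = (- 1) ^ card K / of_nat P"
    unfolding P_def prod_dividef of_nat_prod by simp
  finally have prod: "(\<Prod>k\<in>K. - 1 / (of_nat (q k) - 1) :: rat) = (- 1) ^ card K / of_nat P" .
  have "0 < P" unfolding P_def
  proof (rule prod_pos)
    show "0 < q k - 1" if "k \<in> K" for k using q[OF that] by simp
  qed
  assume "(\<Prod>k\<in>K. - 1 / (of_nat (q k) - 1) :: rat) = 1"
  then have "(- 1 :: rat) ^ card K / of_nat P = 1" unfolding prod .
  then have eq: "(- 1 :: rat) ^ card K = of_nat P" using \<open>0 < P\<close> by (simp add: field_simps)
  have even: "even (card K)"
  proof (rule ccontr)
    assume "odd (card K)"
    then show False using eq by simp
  qed
  then have "P = 1" using eq by simp
  then have "\<forall>k\<in>K. q k - 1 = 1" unfolding P_def using prod_eq_1_iff[OF K, of "\<lambda>k. q k - 1"] by blast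
  then show "even (card K) \<and> (\<forall>k\<in>K. q k = 2)" using even q by force
next
  assume "even (card K) \<and> (\<forall>k\<in>K. q k = 2)"
  then show "(\<Prod>k\<in>K. - 1 / (of_nat (q k) - 1) :: rat) = 1" by simp
qed

context socle_local_product
begin

lemma product_weight_socle_neq_one:
  assumes a: "a \<in> PiE I (\<lambda>k. socle (S k))"
  shows "product_weight a \<noteq> 1"
proof -
  have "socle_coweight (S k) (a k) \<noteq> 0" if "k \<in> I" for k
    using socle_local_ring.socle_coweight_nonzero[OF socle_local_factor[OF that]] PiE_mem[OF a that]
    by blast
  then show ?thesis using finite_index by (simp add: product_weight_def)
qed

lemma product_weight_outside_socle:
  assumes a: "a \<in> carrier R" "a \<notin> PiE I (\<lambda>k. socle (S k))"
  shows "product_weight a = 1"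
proof -
  obtain k where "k \<in> I" "a k \<notin> socle (S k)" using a by (auto simp: prod_ring_simps PiE_iff)
  then have "socle_coweight (S k) (a k) = 0" by (simp add: socle_coweight_def)
  then show ?thesis using \<open>k \<in> I\<close> finite_index by (auto simp: product_weight_def)
qed

lemma prod_socle_coweight:
  assumes a: "a \<in> PiE I (\<lambda>k. socle (S k))"
  shows "(\<Prod>k\<in>I. socle_coweight (S k) (a k))
    = (\<Prod>k\<in>{k \<in> I. a k \<noteq> \<zero>\<^bsub>S k\<^esub>}. - 1 / (of_nat (card (socle (S k))) - 1))"
  using a finite_index
  by (intro prod.mono_neutral_cong_right) (auto simp: socle_coweight_def PiE_iff)

lemma product_weight_zero_iff:
  "(\<exists>a\<in>carrier R. a \<noteq> \<zero>\<^bsub>R\<^esub> \<and> product_weight a = 0) \<longleftrightarrow>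
    (\<exists>k\<in>I. \<exists>l\<in>I. k \<noteq> l \<and> card (socle (S k)) = 2 \<and> card (socle (S l)) = 2)"
  (is "?zero \<longleftrightarrow> ?two")
proof
  have q: "2 \<le> card (socle (S k))" if "k \<in> I" for k
    using socle_local_ring.two_le_card_socle[OF socle_local_factor[OF that]] .
  assume ?zero
  then obtain a where a: "a \<in> carrier R" "a \<noteq> \<zero>\<^bsub>R\<^esub>" "product_weight a = 0" by blast
  have soc: "a \<in> PiE I (\<lambda>k. socle (S k))"
    using product_weight_outside_socle[OF a(1)] a(3) by (metis zero_neq_one)
  define K where "K = {k \<in> I. a k \<noteq> \<zero>\<^bsub>S k\<^esub>}"
  have KI: "K \<subseteq> I" and K: "finite K" using finite_index unfolding K_def by auto
  have qK: "2 \<le> card (socle (S k))" if "k \<in> K" for k using q[OF subsetD[OF KI that]] .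
  have "(\<Prod>k\<in>K. - 1 / (of_nat (card (socle (S k))) - 1) :: rat) = 1"
    using a(3) prod_socle_coweight[OF soc] unfolding product_weight_def K_def by simp
  moreover have "(\<Prod>k\<in>K. - 1 / (of_nat (card (socle (S k))) - 1) :: rat) = 1 \<longleftrightarrow>
      even (card K) \<and> (\<forall>k\<in>K. card (socle (S k)) = 2)"
    by (rule prod_neg_inverse_eq_one_iff[OF K]) (rule qK)
  ultimately have even: "even (card K)" and K2: "\<forall>k\<in>K. card (socle (S k)) = 2" by blast+
  have "K \<noteq> {}" using nonzero_component[OF a(1,2)] unfolding K_def by blast
  then have "card K \<noteq> 0" using K by simp
  then have "2 \<le> card K" using even by presburger
  then obtain k l where "k \<in> K" "l \<in> K" "k \<noteq> l"
    by (metis card_le_Suc_iff numeral_2_eq_2 insertCI)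
  then show ?two using K2 KI by blast
next
  assume ?two
  then obtain k l where kl: "k \<in> I" "l \<in> I" "k \<noteq> l" "card (socle (S k)) = 2" "card (socle (S l)) = 2"
    by blast
  obtain sk where sk: "sk \<in> socle (S k)" "sk \<noteq> \<zero>\<^bsub>S k\<^esub>"
    using socle_local_ring.socle_nonzero[OF socle_local_factor[OF kl(1)]] by blast
  obtain sl where sl: "sl \<in> socle (S l)" "sl \<noteq> \<zero>\<^bsub>S l\<^esub>"
    using socle_local_ring.socle_nonzero[OF socle_local_factor[OF kl(2)]] by blast
  define a where "a = (\<lambda>j\<in>I. if j = k then sk else if j = l then sl else \<zero>\<^bsub>S j\<^esub>)"
  have soc: "a \<in> PiE I (\<lambda>k. socle (S k))"
    using sk sl kl socle_local_ring.zero_in_socle[OF socle_local_factor] by (auto simp: a_def)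
  have support: "{j \<in> I. a j \<noteq> \<zero>\<^bsub>S j\<^esub>} = {k, l}" using sk sl kl by (auto simp: a_def)
  have "product_weight a = 0"
    using prod_socle_coweight[OF soc] kl unfolding product_weight_def support by simp
  moreover have "a \<noteq> \<zero>\<^bsub>R\<^esub>" using kl sk by (auto simp: a_def prod_ring_simps fun_eq_iff)
  moreover have "a \<in> carrier R" using soc PiE_socle_subset_carrier by blast
  ultimately show ?zero by blast
qed

lemma hom_weight_eq_product_weight:
  assumes "normalized_hom_weight R \<omega>" "x \<in> carrier R"
  shows "\<omega> x = product_weight x"
  using ring.normalized_hom_weight_unique[OF ring_prod finite_carrier_prod assms(1)
      normalized_hom_weight_product_weight assms(2)] .

lemma hom_weight_eq_one_iff:
  assumes w: "normalized_hom_weight R \<omega>" and y: "y \<in> carrier R"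
  shows "\<omega> y = 1 \<longleftrightarrow> y \<notin> socle R"
  using hom_weight_eq_product_weight[OF w y] y product_weight_socle_neq_one
    product_weight_outside_socle
  unfolding socle_prod by auto

lemma hom_weight_zero_iff:
  assumes w: "normalized_hom_weight R \<omega>"
  shows "(\<exists>a\<in>carrier R. a \<noteq> \<zero>\<^bsub>R\<^esub> \<and> \<omega> a = 0) \<longleftrightarrow>
    (\<exists>k\<in>I. \<exists>l\<in>I. k \<noteq> l \<and> card (socle (S k)) = 2 \<and> card (socle (S l)) = 2)"
  unfolding product_weight_zero_iff[symmetric]
  using hom_weight_eq_product_weight[OF w] by (intro bex_cong) auto
end

section \<open>Generating characters and reflexivity\<close>

lemma sum_norm_one_eq_card_imp_one:
  fixes w :: "'b \<Rightarrow> complex"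
  assumes fin: "finite B" and norm: "\<And>b. b \<in> B \<Longrightarrow> norm (w b) = 1"
    and sum: "(\<Sum>b\<in>B. w b) = of_nat (card B)" and b: "b \<in> B"
  shows "w b = 1"
proof -
  have re: "Re (w c) \<le> 1" if "c \<in> B" for c
    using complex_Re_le_cmod[of "w c"] norm[OF that] by simp
  have "(\<Sum>c\<in>B. 1 - Re (w c)) = 0"
    using arg_cong[OF sum, of Re] by (simp add: sum_subtractf)
  then have "\<forall>c\<in>B. 1 - Re (w c) = 0"
    using sum_nonneg_eq_0_iff[OF fin, of "\<lambda>c. 1 - Re (w c)"] re by simp
  then have "Re (w b) = 1" using b by simp
  moreover have "(Re (w b))\<^sup>2 + (Im (w b))\<^sup>2 = 1" using norm[OF b] cmod_power2[of "w b"] by simp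
  ultimately show ?thesis by (simp add: complex_eq_iff)
qed

context ring
begin

lemma add_char_zero:
  assumes "\<chi> \<in> add_chars R"
  shows "\<chi> \<zero> = 1"
proof -
  have "\<chi> (\<zero> \<oplus> \<zero>) = \<chi> \<zero> * \<chi> \<zero>" and nz: "\<chi> \<zero> \<noteq> 0"
    using assms zero_closed unfolding add_chars_def by blast+
  then have "\<chi> \<zero> = \<chi> \<zero> * \<chi> \<zero>" by simp
  then show ?thesis using nz by simp
qed

lemma norm_add_char:
  assumes fin: "finite (carrier R)" and \<chi>: "\<chi> \<in> add_chars R" and z: "z \<in> carrier R"
  shows "norm (\<chi> z) = 1"
proof -
  have nz: "\<And>x. x \<in> carrier R \<Longrightarrow> \<chi> x \<noteq> 0"
    and hom: "\<And>x y. x \<in> carrier R \<Longrightarrow> y \<in> carrier R \<Longrightarrow> \<chi> (x \<oplus> y) = \<chi> x * \<chi> y"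
    using \<chi> unfolding add_chars_def by auto
  have "bij_betw (\<lambda>y. z \<oplus> y) (carrier R) (carrier R)"
    by (rule bij_betwI[of _ _ _ "\<lambda>y. \<ominus> z \<oplus> y"])
      (use z in \<open>auto simp: a_assoc[symmetric] l_neg r_neg\<close>)
  then have "(\<Prod>y\<in>carrier R. \<chi> y) = (\<Prod>y\<in>carrier R. \<chi> (z \<oplus> y))"
    by (rule prod.reindex_bij_betw[symmetric])
  also have "\<dots> = \<chi> z ^ card (carrier R) * (\<Prod>y\<in>carrier R. \<chi> y)"
    using z hom by (simp add: prod.distrib)
  finally have "\<chi> z ^ card (carrier R) = 1" using nz fin by simp
  then have "norm (\<chi> z) ^ card (carrier R) = 1" by (metis norm_one norm_power)
  moreover have "card (carrier R) \<noteq> 0" using fin by auto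
  ultimately show ?thesis using power_eq_imp_eq_base[of "norm (\<chi> z)" "card (carrier R)" 1] by simp
qed

text \<open>If \<open>\<Sum>\<^sub>b\<^sub>\<in>\<^sub>B \<chi>(b a') = |B|\<close> for every block \<open>B\<close> of the right dual, then \<open>\<chi>(b a') = 1\<close>
  for all \<open>b\<close> since these are roots of unity; so \<open>x \<mapsto> \<chi>(x a')\<close> is trivial and \<open>a' = 0\<close>
  because \<open>\<chi>\<close> is generating.\<close>

lemma zero_block_left_dual_right_dual:
  assumes fin: "finite (carrier R)" and gen: "generating_char R \<chi>"
  shows "{\<zero>} \<in> left_dual R \<chi> (right_dual R \<chi> P)"
proof -
  have \<chi>: "\<chi> \<in> add_chars R"
    and bij: "bij_betw (\<lambda>r. \<lambda>x\<in>carrier R. \<chi> (x \<otimes> r)) (carrier R) (add_chars R)"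
    using gen unfolding generating_char_def by auto
  define Q where "Q = right_dual R \<chi> P"
  have cover: "\<exists>B\<in>Q. b \<in> B \<and> B \<subseteq> carrier R" if b: "b \<in> carrier R" for b
  proof
    let ?B = "{a' \<in> carrier R. \<forall>B\<in>P. (\<Sum>c\<in>B. \<chi> (b \<otimes> c)) = (\<Sum>c\<in>B. \<chi> (a' \<otimes> c))}"
    show "?B \<in> Q" unfolding Q_def right_dual_def using b by (rule imageI)
    show "b \<in> ?B \<and> ?B \<subseteq> carrier R" using b by auto
  qed
  define X where
    "X = {a' \<in> carrier R. \<forall>B\<in>Q. (\<Sum>b\<in>B. \<chi> (b \<otimes> \<zero>)) = (\<Sum>b\<in>B. \<chi> (b \<otimes> a'))}"
  have "X \<in> left_dual R \<chi> Q" unfolding X_def left_dual_def by (rule imageI) simp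
  moreover have "X = {\<zero>}"
  proof
    show "{\<zero>} \<subseteq> X" unfolding X_def by auto
    show "X \<subseteq> {\<zero>}"
    proof
      fix a' assume a': "a' \<in> X"
      then have a'c: "a' \<in> carrier R" unfolding X_def by blast
      have one: "\<chi> (b \<otimes> a') = 1" if b: "b \<in> carrier R" for b
      proof -
        obtain B where B: "B \<in> Q" "b \<in> B" "B \<subseteq> carrier R" using cover[OF b] by blast
        have "(\<Sum>c\<in>B. \<chi> (c \<otimes> \<zero>)) = of_nat (card B)"
          using B(3) add_char_zero[OF \<chi>] by (simp add: subset_iff)
        then have "(\<Sum>c\<in>B. \<chi> (c \<otimes> a')) = of_nat (card B)"
          using a' B(1) unfolding X_def by auto
        moreover have "norm (\<chi> (c \<otimes> a')) = 1" if "c \<in> B" for c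
          using norm_add_char[OF fin \<chi>] that B(3) a'c by blast
        ultimately show ?thesis
          using sum_norm_one_eq_card_imp_one[OF finite_subset[OF B(3) fin], of "\<lambda>c. \<chi> (c \<otimes> a')"]
            B(2) by blast
      qed
      have "(\<lambda>x\<in>carrier R. \<chi> (x \<otimes> a')) = (\<lambda>x\<in>carrier R. \<chi> (x \<otimes> \<zero>))"
        using one add_char_zero[OF \<chi>] by (auto simp: restrict_def fun_eq_iff)
      then show "a' \<in> {\<zero>}"
        using bij_betw_imp_inj_on[OF bij] a'c unfolding inj_on_def by auto
    qed
  qed
  ultimately show ?thesis unfolding Q_def by simp
qed

lemma zero_block_if_reflexive:
  assumes "finite (carrier R)" "generating_char R \<chi>" "reflexive_partition R \<chi> P"
  shows "{\<zero>} \<in> P"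
  using zero_block_left_dual_right_dual[OF assms(1,2), of P] assms(3)
  unfolding reflexive_partition_def by simp

end

lemma level_partition_complement:
  assumes T: "T \<subseteq> carrier R" "T \<noteq> carrier R"
    and f: "\<And>y. y \<in> carrier R \<Longrightarrow> f y = c \<longleftrightarrow> y \<notin> T"
  shows "carrier R - T \<in> level_partition R f"
proof -
  obtain x where x: "x \<in> carrier R" "x \<notin> T" using T by blast
  then have "f x = c" using f by blast
  then have "carrier R - T = {y \<in> carrier R. f y = f x}" using f by blast
  then show ?thesis unfolding level_partition_def using x(1) by (rule image_eqI)
qed

lemma singleton_notin_level_partition:
  assumes a: "a \<in> carrier R" "a \<noteq> b" "f a = f b"
  shows "{b} \<notin> level_partition R f"
proof
  assume "{b} \<in> level_partition R f"
  then obtain x where X: "{y \<in> carrier R. f y = f x} = {b}" unfolding level_partition_def by blast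
  then have "b \<in> {y \<in> carrier R. f y = f x}" by simp
  then have "a \<in> {y \<in> carrier R. f y = f x}" using a by simp
  then show False using X a(2) by simp
qed

lemma (in ring) not_reflexive_if_hom_weight_zero:
  assumes fin: "finite (carrier R)" and gen: "generating_char R \<chi>"
    and w: "normalized_hom_weight R \<omega>" and a: "a \<in> carrier R" "a \<noteq> \<zero>" "\<omega> a = 0"
  shows "\<not> reflexive_partition R \<chi> (level_partition R \<omega>)"
proof
  assume "reflexive_partition R \<chi> (level_partition R \<omega>)"
  then have "{\<zero>} \<in> level_partition R \<omega>" by (rule zero_block_if_reflexive[OF fin gen])
  moreover have "\<omega> \<zero> = 0" using w unfolding normalized_hom_weight_def by blast
  then have "{\<zero>} \<notin> level_partition R \<omega>"
    using singleton_notin_level_partition[of a R \<zero> \<omega>] a by simp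
  ultimately show False by contradiction
qed

theorem mainTheorem7:
  fixes I :: "'i set" and S :: "'i \<Rightarrow> 'a ring" and \<omega> :: "('i \<Rightarrow> 'a) \<Rightarrow> rat"
  defines "R \<equiv> prod_ring I S"
  defines "q \<equiv> (\<lambda>k. quot_card (S k) (jac_rad (S k)))"
  assumes fin: "finite I"
    and loc: "\<And>k. k \<in> I \<Longrightarrow> local_ring (S k)"
    and frob: "\<And>k. k \<in> I \<Longrightarrow> frobenius_ring (S k)"
    and socsize: "\<And>k. k \<in> I \<Longrightarrow> q k = card (socle (S k))"
    and hw: "normalized_hom_weight R \<omega>"
  shows "(\<forall>a\<in>socle R. \<omega> a \<noteq> 1)
       \<and> (carrier R \<noteq> socle R \<longrightarrow> carrier R - socle R \<in> level_partition R \<omega>)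
       \<and> ((\<exists>a\<in>carrier R. a \<noteq> \<zero>\<^bsub>R\<^esub> \<and> \<omega> a = 0) \<longleftrightarrow>
            (\<exists>k\<in>I. \<exists>l\<in>I. k \<noteq> l \<and> q k = 2 \<and> q l = 2))
       \<and> ((\<exists>a\<in>carrier R. a \<noteq> \<zero>\<^bsub>R\<^esub> \<and> \<omega> a = 0) \<longrightarrow>
            (\<forall>\<chi>. generating_char R \<chi> \<longrightarrow> \<not> reflexive_partition R \<chi> (level_partition R \<omega>)))"
proof -
  have factors: "\<And>k. k \<in> I \<Longrightarrow> socle_local_ring (S k)"
    using socle_local_ringI loc frob socsize unfolding q_def by blast
  interpret socle_local_product I S using fin factors by (rule socle_local_product.intro)
  have w: "normalized_hom_weight (prod_ring I S) \<omega>" using hw unfolding R_def .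
  have socc: "socle R \<subseteq> carrier R"
    unfolding R_def by (rule ring.socle_subset_carrier[OF ring_prod])
  have one: "\<And>y. y \<in> carrier R \<Longrightarrow> \<omega> y = 1 \<longleftrightarrow> y \<notin> socle R"
    unfolding R_def by (rule hom_weight_eq_one_iff[OF w])
  have zero: "(\<exists>a\<in>carrier R. a \<noteq> \<zero>\<^bsub>R\<^esub> \<and> \<omega> a = 0) \<longleftrightarrow>
      (\<exists>k\<in>I. \<exists>l\<in>I. k \<noteq> l \<and> q k = 2 \<and> q l = 2)"
    unfolding R_def hom_weight_zero_iff[OF w] using socsize by (intro bex_cong) auto
  show ?thesis
  proof (intro conjI impI allI)
    show "\<forall>a\<in>socle R. \<omega> a \<noteq> 1" using one socc by blast
    show "carrier R - socle R \<in> level_partition R \<omega>" if "carrier R \<noteq> socle R"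
      using level_partition_complement[OF socc that[symmetric] one] .
    show "\<not> reflexive_partition R \<chi> (level_partition R \<omega>)"
      if "\<exists>a\<in>carrier R. a \<noteq> \<zero>\<^bsub>R\<^esub> \<and> \<omega> a = 0" "generating_char R \<chi>" for \<chi>
      using that ring.not_reflexive_if_hom_weight_zero[OF ring_prod finite_carrier_prod _ w]
      unfolding R_def by blast
  qed (rule zero)
qed

end
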